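(* The function $\operatorname{FMet}^\circ \to \mathbb{R}$, $X \mapsto |X|$, is nowhere continuous: it is not continuous at any point of $\operatorname{FMet}^\circ$ (with respect to the Gromov--Hausdorff topology).
   Context: For a finite metric space $(X,d)$, its similarity matrix $Z_X$ is the $X\times X$ matrix with entries $Z_X(x,y)=e^{-d(x,y)}$. A weighting for $X$ is a vector $\mathbf{w}\in\mathbb{R}^X$ with $(Z_X\mathbf{w})(x)=1$ for all $x\in X$. If a weighting exists, $X$ is said to have magnitude, and the magnitude $|X|$ is the sum of the entries of a weighting (this is independent of the choice of weighting). $\operatorname{FMet}$ denotes the set of isometry classes of finite metric spaces equipped with the Gromov--Hausdorff metric, and $\operatorname{FMet}^\circ\subset\operatorname{FMet}$ is the subspace of those finite metric spaces which have magnitude. *)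

theory Defs
  imports Complex_Main
begin

definition is_metric_on :: "'a set \<Rightarrow> ('a \<Rightarrow> 'a \<Rightarrow> real) \<Rightarrow> bool" where
  "is_metric_on S d \<longleftrightarrow>
     (\<forall>x\<in>S. \<forall>y\<in>S. 0 \<le> d x y \<and> (d x y = 0 \<longleftrightarrow> x = y) \<and> d x y = d y x) \<and>
     (\<forall>x\<in>S. \<forall>y\<in>S. \<forall>z\<in>S. d x z \<le> d x y + d y z)"

definition fin_metric_space :: "'a set \<Rightarrow> ('a \<Rightarrow> 'a \<Rightarrow> real) \<Rightarrow> bool" where
  "fin_metric_space S d \<longleftrightarrow> finite S \<and> S \<noteq> {} \<and> is_metric_on S d"

definition weighting :: "'a set \<Rightarrow> ('a \<Rightarrow> 'a \<Rightarrow> real) \<Rightarrow> ('a \<Rightarrow> real) \<Rightarrow> bool" where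
  "weighting S d w \<longleftrightarrow> (\<forall>x\<in>S. (\<Sum>y\<in>S. exp (- d x y) * w y) = 1)"

definition has_magnitude :: "'a set \<Rightarrow> ('a \<Rightarrow> 'a \<Rightarrow> real) \<Rightarrow> bool" where
  "has_magnitude S d \<longleftrightarrow> (\<exists>w. weighting S d w)"

definition magnitude :: "'a set \<Rightarrow> ('a \<Rightarrow> 'a \<Rightarrow> real) \<Rightarrow> real" where
  "magnitude S d = (\<Sum>y\<in>S. (SOME w. weighting S d w) y)"

definition hausdorff_fin :: "('b \<Rightarrow> 'b \<Rightarrow> real) \<Rightarrow> 'b set \<Rightarrow> 'b set \<Rightarrow> real" where
  "hausdorff_fin D A B =
     max (Max ((\<lambda>a. Min ((\<lambda>b. D a b) ` B)) ` A)) (Max ((\<lambda>b. Min ((\<lambda>a. D a b) ` A)) ` B))"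

definition gh_dist :: "'a set \<Rightarrow> ('a \<Rightarrow> 'a \<Rightarrow> real) \<Rightarrow> 'c set \<Rightarrow> ('c \<Rightarrow> 'c \<Rightarrow> real) \<Rightarrow> real" where
  "gh_dist X dX Y dY = Inf {hausdorff_fin D (Inl ` X) (Inr ` Y) | D.
      is_metric_on (Inl ` X \<union> Inr ` Y) D \<and>
      (\<forall>x\<in>X. \<forall>x'\<in>X. D (Inl x) (Inl x') = dX x x') \<and>
      (\<forall>y\<in>Y. \<forall>y'\<in>Y. D (Inr y) (Inr y') = dY y y')}"

end

theory Submission
  imports Defs
begin

text \<open>
  Glue to X, at one of its points p, the complete split graph G whose clique consists of p and
  two further points and whose independent set has three points, every edge having length u.
  The wedge sum contains X and each new point lies at distance u from p, so it is within
  Gromov--Hausdorff distance u of X. Magnitude is additive on wedge sums up to the shared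
  point, |X \<or> G| = |X| + |G| - 1, and |G| = 6 / (1 + 4 exp(-u)), which tends to 6/5 rather
  than 1 as u \<rightarrow> 0. So spaces arbitrarily close to X have magnitude exceeding |X| by more than 1/5.
\<close>

lemma magnitude_eq_sum_weighting:
  assumes w: "weighting S d w" and sym: "\<And>x y. x \<in> S \<Longrightarrow> y \<in> S \<Longrightarrow> d x y = d y x"
  shows "magnitude S d = sum w S"
proof -
  define v where "v = (SOME w. weighting S d w)"
  have v: "weighting S d v" unfolding v_def using w by (rule someI[of "weighting S d"])
  have "sum v S = (\<Sum>y\<in>S. v y * (\<Sum>z\<in>S. exp (- d y z) * w z))"
    using w unfolding weighting_def by simp
  also have "\<dots> = (\<Sum>y\<in>S. \<Sum>z\<in>S. w z * (exp (- d z y) * v y))"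
    by (intro sum.cong refl) (auto simp: sum_distrib_left sym mult_ac intro!: sum.cong)
  also have "\<dots> = (\<Sum>z\<in>S. w z * (\<Sum>y\<in>S. exp (- d z y) * v y))"
    by (subst sum.swap) (simp add: sum_distrib_left)
  also have "\<dots> = sum w S"
    using v unfolding weighting_def by simp
  finally show ?thesis unfolding magnitude_def v_def by simp
qed

section \<open>Complete split graphs\<close>

text \<open>The graph metric, scaled by u, of the complete split graph on a carrier S with independent
  set B \<subseteq> S and clique S - B.\<close>

definition split_graph_dist :: "'a set \<Rightarrow> real \<Rightarrow> 'a \<Rightarrow> 'a \<Rightarrow> real" where
  "split_graph_dist B u y z = (if y = z then 0 else if y \<in> B \<and> z \<in> B then 2 * u else u)"

lemma is_metric_on_split_graph:
  assumes "u > 0"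
  shows "is_metric_on S (split_graph_dist B u)"
  using assms unfolding is_metric_on_def split_graph_dist_def by auto

lemma sum_if_eq_const:
  fixes c c' :: "'b::ring_1"
  assumes "finite A"
  shows "(\<Sum>z\<in>A. if z = y then c else c') = of_nat (card A) * c' + (if y \<in> A then c - c' else 0)"
proof -
  have "(\<Sum>z\<in>A. if z = y then c else c') = (\<Sum>z\<in>A. c' + (if z = y then c - c' else 0))"
    by (intro sum.cong) auto
  then show ?thesis using assms by (simp add: sum.distrib sum.delta' mult_of_nat_commute)
qed

lemma weighting_split_graph:
  fixes S B :: "'a set" and a b u :: real
  defines "s \<equiv> exp (- u)" and "m \<equiv> real (card (S - B))" and "n \<equiv> real (card B)"
  assumes S: "finite S" "B \<subseteq> S"
    and eq_clique: "a * (1 + (m - 1) * s) + n * s * b = 1"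
    and eq_indep: "m * s * a + (1 + (n - 1) * s\<^sup>2) * b = 1"
  shows "weighting S (split_graph_dist B u) (\<lambda>y. if y \<in> B then b else a)"
  unfolding weighting_def
proof
  fix y assume y: "y \<in> S"
  have exp2: "exp (- (2 * u)) = s\<^sup>2"
    unfolding s_def by (simp add: power2_eq_square flip: exp_add)
  have finB: "finite B" using S finite_subset by blast
  let ?f = "\<lambda>z. exp (- split_graph_dist B u y z) * (if z \<in> B then b else a)"
  have split: "sum ?f S = sum ?f (S - B) + sum ?f B"
    by (rule sum.subset_diff[OF S(2) S(1)])
  have "sum ?f (S - B) = (\<Sum>z\<in>S - B. if z = y then a else s * a)"
    by (intro sum.cong) (auto simp: split_graph_dist_def s_def)
  also have "\<dots> = m * s * a + (if y \<in> B then 0 else a - s * a)"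
    using S y by (subst sum_if_eq_const) (auto simp: m_def)
  finally have clique: "sum ?f (S - B) = m * s * a + (if y \<in> B then 0 else a - s * a)" .
  show "sum ?f S = 1"
  proof (cases "y \<in> B")
    case True
    have "sum ?f B = (\<Sum>z\<in>B. if z = y then b else s\<^sup>2 * b)"
      using True exp2 by (intro sum.cong) (auto simp: split_graph_dist_def)
    also have "\<dots> = n * s\<^sup>2 * b + (b - s\<^sup>2 * b)"
      using finB True by (subst sum_if_eq_const) (auto simp: n_def)
    finally have "sum ?f B = n * s\<^sup>2 * b + (b - s\<^sup>2 * b)" .
    then show ?thesis using split clique True eq_indep by (simp add: algebra_simps)
  next
    case False
    have "sum ?f B = (\<Sum>z\<in>B. s * b)"
      using False by (intro sum.cong) (auto simp: split_graph_dist_def s_def)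
    then have "sum ?f B = n * s * b" by (simp add: n_def)
    then show ?thesis using split clique False eq_clique by (simp add: algebra_simps)
  qed
qed

lemma magnitude_split_graph_3_3:
  assumes S: "finite S" "B \<subseteq> S" and card: "card B = 3" "card (S - B) = 3" and u: "u > 0"
  shows "has_magnitude S (split_graph_dist B u)"
    and "magnitude S (split_graph_dist B u) = 6 / (1 + 4 * exp (- u))"
proof -
  define s where "s = exp (- u)"
  have "0 < s" "s < 1" using u unfolding s_def by auto
  define D where "D = (1 - s) * (1 + 4 * s)"
  have D: "D \<noteq> 0" "1 + 4 * s \<noteq> 0" using \<open>0 < s\<close> \<open>s < 1\<close> by (simp_all add: D_def)
  define a where "a = (1 - 2 * s) / D"
  define b where "b = 1 / D"
  have eq_clique: "a * (1 + (3 - 1) * s) + 3 * s * b = 1"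
    and eq_indep: "3 * s * a + (1 + (3 - 1) * s\<^sup>2) * b = 1"
    and sum_ab: "3 * b + 3 * a = 6 / (1 + 4 * s)"
    using D by (simp_all add: a_def b_def field_simps) (simp_all add: D_def algebra_simps power2_eq_square)
  have w: "weighting S (split_graph_dist B u) (\<lambda>y. if y \<in> B then b else a)"
    using weighting_split_graph[OF S, of a u b] eq_clique eq_indep card by (simp add: s_def)
  then show "has_magnitude S (split_graph_dist B u)" unfolding has_magnitude_def by blast
  have "magnitude S (split_graph_dist B u) = (\<Sum>y\<in>S. if y \<in> B then b else a)"
    using w by (intro magnitude_eq_sum_weighting) (auto simp: split_graph_dist_def)
  also have "\<dots> = 3 * b + 3 * a"
    using S card by (simp add: sum.If_cases Int_absorb1 Diff_eq[symmetric])
  finally show "magnitude S (split_graph_dist B u) = 6 / (1 + 4 * exp (- u))"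
    using sum_ab by (simp add: s_def)
qed

section \<open>Wedge sums\<close>

text \<open>The wedge sum of X and G glued at p, where X \<inter> G = {p}. The map
  y \<mapsto> (\<pi>X y, \<pi>G y), collapsing the other summand to p, embeds it isometrically into
  X \<times> G with the sum metric.\<close>

definition wedge_dist :: "'a set \<Rightarrow> ('a \<Rightarrow> 'a \<Rightarrow> real) \<Rightarrow> ('a \<Rightarrow> 'a \<Rightarrow> real) \<Rightarrow> 'a \<Rightarrow> 'a \<Rightarrow> 'a \<Rightarrow> real" where
  "wedge_dist X d g p y z =
     d (if y \<in> X then y else p) (if z \<in> X then z else p) +
     g (if y \<in> X then p else y) (if z \<in> X then p else z)"

definition wedge_weight :: "'a set \<Rightarrow> ('a \<Rightarrow> real) \<Rightarrow> ('a \<Rightarrow> real) \<Rightarrow> 'a \<Rightarrow> 'a \<Rightarrow> real" where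
  "wedge_weight X w v p z = (if z \<in> X then w z + (if z = p then v p - 1 else 0) else v z)"

lemma is_metric_on_wedge:
  assumes d: "is_metric_on X d" and g: "is_metric_on G g" and XG: "X \<inter> G = {p}"
  shows "is_metric_on (X \<union> G) (wedge_dist X d g p)"
proof -
  define \<pi>X where "\<pi>X y = (if y \<in> X then y else p)" for y
  define \<pi>G where "\<pi>G y = (if y \<in> X then p else y)" for y
  have dist: "wedge_dist X d g p y z = d (\<pi>X y) (\<pi>X z) + g (\<pi>G y) (\<pi>G z)" for y z
    unfolding wedge_dist_def \<pi>X_def \<pi>G_def ..
  have proj: "\<pi>X y \<in> X" "\<pi>G y \<in> G" if "y \<in> X \<union> G" for y
    using that XG by (auto simp: \<pi>X_def \<pi>G_def)
  have proj_inj: "y = z" if "y \<in> X \<union> G" "z \<in> X \<union> G" "\<pi>X y = \<pi>X z" "\<pi>G y = \<pi>G z" for y z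
    using that XG by (auto simp: \<pi>X_def \<pi>G_def split: if_splits)
  show ?thesis unfolding is_metric_on_def dist
  proof (intro conjI ballI)
    fix y z assume y: "y \<in> X \<union> G" and z: "z \<in> X \<union> G"
    have "0 \<le> d (\<pi>X y) (\<pi>X z)" "0 \<le> g (\<pi>G y) (\<pi>G z)"
      and "d (\<pi>X y) (\<pi>X z) = 0 \<longleftrightarrow> \<pi>X y = \<pi>X z" "g (\<pi>G y) (\<pi>G z) = 0 \<longleftrightarrow> \<pi>G y = \<pi>G z"
      and "d (\<pi>X y) (\<pi>X z) = d (\<pi>X z) (\<pi>X y)" "g (\<pi>G y) (\<pi>G z) = g (\<pi>G z) (\<pi>G y)"
      using d g proj[OF y] proj[OF z] unfolding is_metric_on_def by blast+
    then show "0 \<le> d (\<pi>X y) (\<pi>X z) + g (\<pi>G y) (\<pi>G z)"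
      and "d (\<pi>X y) (\<pi>X z) + g (\<pi>G y) (\<pi>G z) = 0 \<longleftrightarrow> y = z"
      and "d (\<pi>X y) (\<pi>X z) + g (\<pi>G y) (\<pi>G z) = d (\<pi>X z) (\<pi>X y) + g (\<pi>G z) (\<pi>G y)"
      using proj_inj[OF y z] by auto
  next
    fix x y z assume "x \<in> X \<union> G" "y \<in> X \<union> G" "z \<in> X \<union> G"
    then have "d (\<pi>X x) (\<pi>X z) \<le> d (\<pi>X x) (\<pi>X y) + d (\<pi>X y) (\<pi>X z)"
      and "g (\<pi>G x) (\<pi>G z) \<le> g (\<pi>G x) (\<pi>G y) + g (\<pi>G y) (\<pi>G z)"
      using d g proj unfolding is_metric_on_def by blast+
    then show "d (\<pi>X x) (\<pi>X z) + g (\<pi>G x) (\<pi>G z) \<le>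
        d (\<pi>X x) (\<pi>X y) + g (\<pi>G x) (\<pi>G y) + (d (\<pi>X y) (\<pi>X z) + g (\<pi>G y) (\<pi>G z))"
      by linarith
  qed
qed

lemma wedge_dist_eq:
  assumes "X \<inter> G = {p}" "d p p = 0" "g p p = 0"
  shows "y \<in> X \<Longrightarrow> z \<in> X \<Longrightarrow> wedge_dist X d g p y z = d y z"
    and "y \<in> X \<Longrightarrow> z \<in> G - {p} \<Longrightarrow> wedge_dist X d g p y z = d y p + g p z"
    and "y \<in> G - {p} \<Longrightarrow> z \<in> X \<Longrightarrow> wedge_dist X d g p y z = g y p + d p z"
    and "y \<in> G - {p} \<Longrightarrow> z \<in> G - {p} \<Longrightarrow> wedge_dist X d g p y z = g y z"
  using assms by (auto simp: wedge_dist_def)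

lemma sum_wedge_weight:
  assumes XG: "X \<inter> G = {p}" and fin: "finite X" "finite G"
  shows "sum (wedge_weight X w v p) (X \<union> G) = sum w X + sum v G - 1"
proof -
  have p: "p \<in> X" "p \<in> G" and union: "X \<union> G = X \<union> (G - {p})" and disj: "X \<inter> (G - {p}) = {}"
    using XG by auto
  have "sum (wedge_weight X w v p) X = (\<Sum>z\<in>X. w z + (if z = p then v p - 1 else 0))"
    by (intro sum.cong) (auto simp: wedge_weight_def)
  then have "sum (wedge_weight X w v p) X = sum w X + (v p - 1)"
    using fin p by (simp add: sum.distrib sum.delta')
  moreover have "sum (wedge_weight X w v p) (G - {p}) = sum v (G - {p})"
    using disj by (intro sum.cong) (auto simp: wedge_weight_def)
  ultimately show ?thesis
    unfolding union using fin disj p by (simp add: sum.union_disjoint sum_diff1)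
qed

lemma weighting_wedge:
  assumes XG: "X \<inter> G = {p}" and fin: "finite X" "finite G" and "d p p = 0" "g p p = 0"
    and w: "weighting X d w" and v: "weighting G g v"
  shows "weighting (X \<union> G) (wedge_dist X d g p) (wedge_weight X w v p)"
  unfolding weighting_def
proof
  fix y assume "y \<in> X \<union> G"
  have p: "p \<in> X" "p \<in> G" and union: "X \<union> G = X \<union> (G - {p})" and disj: "X \<inter> (G - {p}) = {}"
    using XG by auto
  note dist = wedge_dist_eq[where d = d and g = g, OF XG \<open>d p p = 0\<close> \<open>g p p = 0\<close>]
  let ?W = "wedge_weight X w v p"
  have exp_neg_add: "exp (- a - b) = exp (- a) * exp (- b)" for a b :: real
    by (simp flip: exp_add)
  have sum_X: "(\<Sum>z\<in>X. exp (- d x z) * ?W z) = 1 + exp (- d x p) * (v p - 1)" if "x \<in> X" for x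
  proof -
    have "(\<Sum>z\<in>X. exp (- d x z) * ?W z) =
        (\<Sum>z\<in>X. exp (- d x z) * w z + (if z = p then exp (- d x z) * (v p - 1) else 0))"
      by (intro sum.cong) (auto simp: wedge_weight_def algebra_simps)
    then show ?thesis using w that fin p unfolding weighting_def by (simp add: sum.distrib sum.delta')
  qed
  have sum_G: "(\<Sum>z\<in>G - {p}. exp (- g x z) * v z) = 1 - exp (- g x p) * v p" if "x \<in> G" for x
    using v that fin p unfolding weighting_def by (simp add: sum_diff1)
  let ?f = "\<lambda>z. exp (- wedge_dist X d g p y z) * ?W z"
  have split: "sum ?f (X \<union> G) = sum ?f X + sum ?f (G - {p})"
    unfolding union using fin disj by (intro sum.union_disjoint) auto
  from \<open>y \<in> X \<union> G\<close> p consider (X) "y \<in> X" | (G) "y \<in> G - {p}" by blast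
  then show "sum ?f (X \<union> G) = 1"
  proof cases
    case X
    have "sum ?f (G - {p}) = (\<Sum>z\<in>G - {p}. exp (- d y p) * (exp (- g p z) * v z))"
      using X dist(2) disj by (intro sum.cong) (auto simp: wedge_weight_def exp_neg_add)
    then have "sum ?f (G - {p}) = exp (- d y p) * (1 - v p)"
      using sum_G[of p] p \<open>g p p = 0\<close> by (simp flip: sum_distrib_left)
    moreover have "sum ?f X = 1 + exp (- d y p) * (v p - 1)"
      using X dist(1) sum_X[of y] by simp
    ultimately show ?thesis using split by (simp add: algebra_simps)
  next
    case G
    have "sum ?f X = (\<Sum>z\<in>X. exp (- g y p) * (exp (- d p z) * ?W z))"
      using G dist(3) by (intro sum.cong) (auto simp: exp_neg_add add.commute)
    then have "sum ?f X = exp (- g y p) * v p"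
      using sum_X[of p] p \<open>d p p = 0\<close> by (simp flip: sum_distrib_left)
    moreover have "sum ?f (G - {p}) = (\<Sum>z\<in>G - {p}. exp (- g y z) * v z)"
      using G dist(4) disj by (intro sum.cong) (auto simp: wedge_weight_def)
    ultimately show ?thesis using split sum_G[of y] G by simp
  qed
qed

lemma magnitude_wedge:
  assumes X: "fin_metric_space X d" and G: "fin_metric_space G g" and XG: "X \<inter> G = {p}"
    and "has_magnitude X d" "has_magnitude G g"
  shows "has_magnitude (X \<union> G) (wedge_dist X d g p)"
    and "magnitude (X \<union> G) (wedge_dist X d g p) = magnitude X d + magnitude G g - 1"
proof -
  obtain w v where w: "weighting X d w" and v: "weighting G g v"
    using assms(4,5) unfolding has_magnitude_def by blast
  have "p \<in> X" "p \<in> G" using XG by auto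
  then have "d p p = 0" "g p p = 0"
    using X G unfolding fin_metric_space_def is_metric_on_def by blast+
  then have W: "weighting (X \<union> G) (wedge_dist X d g p) (wedge_weight X w v p)"
    "sum (wedge_weight X w v p) (X \<union> G) = sum w X + sum v G - 1"
    using weighting_wedge[OF XG _ _ _ _ w v] sum_wedge_weight[OF XG] X G
    unfolding fin_metric_space_def by blast+
  then show "has_magnitude (X \<union> G) (wedge_dist X d g p)"
    unfolding has_magnitude_def by blast
  have "is_metric_on (X \<union> G) (wedge_dist X d g p)"
    using is_metric_on_wedge[OF _ _ XG] X G unfolding fin_metric_space_def by blast
  then have "magnitude (X \<union> G) (wedge_dist X d g p) = sum w X + sum v G - 1"
    using W by (subst magnitude_eq_sum_weighting[OF W(1)]) (auto simp: is_metric_on_def)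
  moreover have "magnitude X d = sum w X" "magnitude G g = sum v G"
    using X G by (auto intro!: magnitude_eq_sum_weighting w v simp: fin_metric_space_def is_metric_on_def)
  ultimately show "magnitude (X \<union> G) (wedge_dist X d g p) = magnitude X d + magnitude G g - 1"
    by simp
qed

section \<open>Gromov--Hausdorff distance to a superspace\<close>

lemma is_metric_on_subset: "is_metric_on S d \<Longrightarrow> T \<subseteq> S \<Longrightarrow> is_metric_on T d"
  unfolding is_metric_on_def by blast

definition offset_copies_dist :: "('a \<Rightarrow> 'a \<Rightarrow> real) \<Rightarrow> real \<Rightarrow> 'a + 'a \<Rightarrow> 'a + 'a \<Rightarrow> real" where
  "offset_copies_dist e r p q =
     e (case_sum id id p) (case_sum id id q) + (if isl p = isl q then 0 else r)"

lemma is_metric_on_offset_copies: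
  assumes e: "is_metric_on Y e" and r: "r > 0"
  shows "is_metric_on (Inl ` Y \<union> Inr ` Y) (offset_copies_dist e r)"
proof -
  define \<pi> :: "'a + 'a \<Rightarrow> 'a" where "\<pi> = case_sum id id"
  define \<delta> where "\<delta> p q = (if isl p = isl q then 0 else r)" for p q :: "'a + 'a"
  have dist: "offset_copies_dist e r p q = e (\<pi> p) (\<pi> q) + \<delta> p q" for p q
    unfolding offset_copies_dist_def \<pi>_def \<delta>_def ..
  have proj: "\<pi> p \<in> Y" if "p \<in> Inl ` Y \<union> Inr ` Y" for p
    using that by (auto simp: \<pi>_def)
  have proj_inj: "p = q" if "\<pi> p = \<pi> q" "isl p = isl q" for p q
    using that by (cases p; cases q) (auto simp: \<pi>_def)
  show ?thesis unfolding is_metric_on_def dist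
  proof (intro conjI ballI)
    fix p q assume p: "p \<in> Inl ` Y \<union> Inr ` Y" and q: "q \<in> Inl ` Y \<union> Inr ` Y"
    have "0 \<le> e (\<pi> p) (\<pi> q)" "e (\<pi> p) (\<pi> q) = 0 \<longleftrightarrow> \<pi> p = \<pi> q" "e (\<pi> p) (\<pi> q) = e (\<pi> q) (\<pi> p)"
      using e proj[OF p] proj[OF q] unfolding is_metric_on_def by blast+
    then show "0 \<le> e (\<pi> p) (\<pi> q) + \<delta> p q"
      and "e (\<pi> p) (\<pi> q) + \<delta> p q = 0 \<longleftrightarrow> p = q"
      and "e (\<pi> p) (\<pi> q) + \<delta> p q = e (\<pi> q) (\<pi> p) + \<delta> q p"
      using r proj_inj[of p q] by (auto simp: \<delta>_def)
  next
    fix p q t assume "p \<in> Inl ` Y \<union> Inr ` Y" "q \<in> Inl ` Y \<union> Inr ` Y" "t \<in> Inl ` Y \<union> Inr ` Y"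
    then have "e (\<pi> p) (\<pi> t) \<le> e (\<pi> p) (\<pi> q) + e (\<pi> q) (\<pi> t)"
      using e proj unfolding is_metric_on_def by blast
    moreover have "\<delta> p t \<le> \<delta> p q + \<delta> q t"
      using r by (auto simp: \<delta>_def)
    ultimately show "e (\<pi> p) (\<pi> t) + \<delta> p t \<le> e (\<pi> p) (\<pi> q) + \<delta> p q + (e (\<pi> q) (\<pi> t) + \<delta> q t)"
      by linarith
  qed
qed

lemma hausdorff_fin_le:
  assumes "finite A" "finite B" "A \<noteq> {}" "B \<noteq> {}"
    and "\<forall>a\<in>A. \<exists>b\<in>B. D a b \<le> c" and "\<forall>b\<in>B. \<exists>a\<in>A. D a b \<le> c"
  shows "hausdorff_fin D A B \<le> c"
  using assms by (simp add: hausdorff_fin_def Min_le_iff)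

lemma hausdorff_fin_nonneg:
  assumes "finite A" "finite B" "A \<noteq> {}" "B \<noteq> {}" and "\<forall>a\<in>A. \<forall>b\<in>B. 0 \<le> D a b"
  shows "0 \<le> hausdorff_fin D A B"
  using assms by (auto simp: hausdorff_fin_def le_max_iff_disj Max_ge_iff Min_ge_iff)

lemma gh_dist_le_hausdorff_fin:
  assumes "finite X" "finite Y" "X \<noteq> {}" "Y \<noteq> {}"
    and "is_metric_on (Inl ` X \<union> Inr ` Y) D"
    and "\<forall>x\<in>X. \<forall>x'\<in>X. D (Inl x) (Inl x') = d x x'" and "\<forall>y\<in>Y. \<forall>y'\<in>Y. D (Inr y) (Inr y') = e y y'"
  shows "gh_dist X d Y e \<le> hausdorff_fin D (Inl ` X) (Inr ` Y)"
  unfolding gh_dist_def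
proof (rule cInf_lower)
  show "hausdorff_fin D (Inl ` X) (Inr ` Y) \<in> {hausdorff_fin D (Inl ` X) (Inr ` Y) | D.
      is_metric_on (Inl ` X \<union> Inr ` Y) D \<and>
      (\<forall>x\<in>X. \<forall>x'\<in>X. D (Inl x) (Inl x') = d x x') \<and>
      (\<forall>y\<in>Y. \<forall>y'\<in>Y. D (Inr y) (Inr y') = e y y')}"
    using assms by blast
  show "bdd_below {hausdorff_fin D (Inl ` X) (Inr ` Y) | D.
      is_metric_on (Inl ` X \<union> Inr ` Y) D \<and>
      (\<forall>x\<in>X. \<forall>x'\<in>X. D (Inl x) (Inl x') = d x x') \<and>
      (\<forall>y\<in>Y. \<forall>y'\<in>Y. D (Inr y) (Inr y') = e y y')}"
    using assms(1-4) by (intro bdd_belowI[of _ 0]) (auto intro!: hausdorff_fin_nonneg simp: is_metric_on_def)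
qed

lemma gh_dist_le_of_subspace:
  assumes X: "fin_metric_space X d" and Y: "finite Y" "is_metric_on Y e" and "X \<subseteq> Y"
    and agree: "\<forall>x\<in>X. \<forall>x'\<in>X. e x x' = d x x'" and near: "\<forall>y\<in>Y. \<exists>x\<in>X. e x y \<le> c"
  shows "gh_dist X d Y e \<le> c"
proof (rule field_le_epsilon)
  fix r :: real assume "r > 0"
  have X': "finite X" "X \<noteq> {}" using X unfolding fin_metric_space_def by auto
  then have "Y \<noteq> {}" using \<open>X \<subseteq> Y\<close> by auto
  have e: "0 \<le> e x y" "e x x = 0" if "x \<in> Y" "y \<in> Y" for x y
    using Y(2) that unfolding is_metric_on_def by blast+
  obtain x y where "x \<in> X" "y \<in> X" "e y x \<le> c"
    using near \<open>X \<noteq> {}\<close> \<open>X \<subseteq> Y\<close> by blast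
  then have "0 \<le> c" using e(1)[of y x] \<open>X \<subseteq> Y\<close> by force
  have "is_metric_on (Inl ` X \<union> Inr ` Y) (offset_copies_dist e r)"
    by (rule is_metric_on_subset[OF is_metric_on_offset_copies[OF Y(2) \<open>r > 0\<close>]])
      (use \<open>X \<subseteq> Y\<close> in auto)
  then have "gh_dist X d Y e \<le> hausdorff_fin (offset_copies_dist e r) (Inl ` X) (Inr ` Y)"
    using X' Y \<open>Y \<noteq> {}\<close> agree by (intro gh_dist_le_hausdorff_fin) (auto simp: offset_copies_dist_def)
  also have "\<dots> \<le> c + r"
  proof (rule hausdorff_fin_le)
    show "\<forall>a\<in>Inl ` X. \<exists>b\<in>Inr ` Y. offset_copies_dist e r a b \<le> c + r"
    proof
      fix a :: "'a + 'a" assume "a \<in> Inl ` X"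
      then obtain x where "x \<in> X" "a = Inl x" by blast
      then show "\<exists>b\<in>Inr ` Y. offset_copies_dist e r a b \<le> c + r"
        using \<open>X \<subseteq> Y\<close> \<open>0 \<le> c\<close> e(2)[of x x]
        by (intro bexI[of _ "Inr x"]) (auto simp: offset_copies_dist_def)
    qed
    show "\<forall>b\<in>Inr ` Y. \<exists>a\<in>Inl ` X. offset_copies_dist e r a b \<le> c + r"
    proof
      fix b :: "'a + 'a" assume "b \<in> Inr ` Y"
      then obtain y where "y \<in> Y" "b = Inr y" by blast
      then obtain x where "x \<in> X" "e x y \<le> c" using near by blast
      then show "\<exists>a\<in>Inl ` X. offset_copies_dist e r a b \<le> c + r"
        using \<open>b = Inr y\<close> by (intro bexI[of _ "Inl x"]) (auto simp: offset_copies_dist_def)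
    qed
  qed (use X' Y \<open>Y \<noteq> {}\<close> in auto)
  finally show "gh_dist X d Y e \<le> c + r" .
qed

lemma gh_dist_wedge_le:
  assumes X: "fin_metric_space X d" and G: "finite G" "is_metric_on G g" and XG: "X \<inter> G = {p}"
    and near: "\<forall>y\<in>G. g p y \<le> c"
  shows "gh_dist X d (X \<union> G) (wedge_dist X d g p) \<le> c"
proof (rule gh_dist_le_of_subspace)
  have dX: "is_metric_on X d" using X unfolding fin_metric_space_def by blast
  have p: "p \<in> X" "p \<in> G" using XG by auto
  then have "d p p = 0" "g p p = 0" using dX G(2) unfolding is_metric_on_def by blast+
  show "is_metric_on (X \<union> G) (wedge_dist X d g p)"
    using is_metric_on_wedge[OF dX G(2) XG] .
  show "\<forall>x\<in>X. \<forall>x'\<in>X. wedge_dist X d g p x x' = d x x'"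
    using \<open>g p p = 0\<close> by (simp add: wedge_dist_def)
  show "\<forall>y\<in>X \<union> G. \<exists>x\<in>X. wedge_dist X d g p x y \<le> c"
  proof
    fix y assume "y \<in> X \<union> G"
    then consider (X) "y \<in> X" | (G) "y \<in> G - X" by blast
    then show "\<exists>x\<in>X. wedge_dist X d g p x y \<le> c"
    proof cases
      case X
      then have "d y y = 0" using dX unfolding is_metric_on_def by blast
      moreover have "0 \<le> c" using near p \<open>g p p = 0\<close> by force
      ultimately show ?thesis using X \<open>g p p = 0\<close>
        by (intro bexI[of _ y]) (simp_all add: wedge_dist_def)
    next
      case G
      then show ?thesis using p near \<open>d p p = 0\<close>
        by (intro bexI[of _ p]) (simp_all add: wedge_dist_def)
    qed
  qed
qed (use X G in \<open>auto simp: fin_metric_space_def\<close>)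

lemma obtain_split_graph_carrier:
  fixes X :: "'a set"
  assumes "infinite (UNIV :: 'a set)" and "finite X" and "p \<in> X"
  obtains G B where "X \<inter> G = {p}" "finite G" "B \<subseteq> G" "card B = 3" "card (G - B) = 3" "p \<notin> B"
proof -
  have "infinite (- X)"
    using Diff_infinite_finite[OF assms(2,1)] by (simp add: Compl_eq_Diff_UNIV)
  then obtain B where B: "B \<subseteq> - X" "finite B" "card B = 3"
    using infinite_arbitrarily_large by blast
  have "infinite (- (X \<union> B))"
    using Diff_infinite_finite[OF _ assms(1), of "X \<union> B"] assms(2) B(2)
    by (simp add: Compl_eq_Diff_UNIV)
  then obtain A where A: "A \<subseteq> - (X \<union> B)" "finite A" "card A = 2"
    using infinite_arbitrarily_large by blast
  have "insert p (A \<union> B) - B = insert p A" using assms(3) A B by auto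
  then have "card (insert p (A \<union> B) - B) = 3" using assms(3) A by (auto simp: card_insert_if)
  then show thesis using that[of "insert p (A \<union> B)" B] assms(3) A B by auto
qed

lemma near_space_with_magnitude_jump:
  fixes X :: "'a set"
  assumes "infinite (UNIV :: 'a set)" and X: "fin_metric_space X d" "has_magnitude X d"
    and u: "u > 0"
  obtains Y :: "'a set" and e where
    "fin_metric_space Y e" "has_magnitude Y e" "gh_dist X d Y e \<le> u"
    "magnitude Y e = magnitude X d + 6 / (1 + 4 * exp (- u)) - 1"
proof -
  have finX: "finite X" and "X \<noteq> {}" and dX: "is_metric_on X d"
    using X(1) unfolding fin_metric_space_def by auto
  then obtain p where "p \<in> X" by blast
  then obtain G B where XG: "X \<inter> G = {p}" and G: "finite G" "B \<subseteq> G" "card B = 3" "card (G - B) = 3"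
    and "p \<notin> B"
    using obtain_split_graph_carrier assms(1) finX by metis
  let ?g = "split_graph_dist B u"
  have g: "fin_metric_space G ?g"
    using is_metric_on_split_graph[OF u] G XG unfolding fin_metric_space_def by auto
  note magG = magnitude_split_graph_3_3[OF G u]
  show ?thesis
  proof
    show "fin_metric_space (X \<union> G) (wedge_dist X d ?g p)"
      using is_metric_on_wedge[OF dX _ XG] finX g unfolding fin_metric_space_def by auto
    show "has_magnitude (X \<union> G) (wedge_dist X d ?g p)"
      and "magnitude (X \<union> G) (wedge_dist X d ?g p) = magnitude X d + 6 / (1 + 4 * exp (- u)) - 1"
      using magnitude_wedge[OF X(1) g XG X(2) magG(1)] magG(2) by auto
    show "gh_dist X d (X \<union> G) (wedge_dist X d ?g p) \<le> u"
      using g XG u \<open>p \<notin> B\<close> unfolding fin_metric_space_def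
      by (intro gh_dist_wedge_le[OF X(1)]) (simp_all add: split_graph_dist_def)
  qed
qed

theorem theorem2p5:
  fixes X :: "nat set" and d :: "nat \<Rightarrow> nat \<Rightarrow> real"
  assumes "fin_metric_space X d" and "has_magnitude X d"
  shows "\<not> (\<forall>\<epsilon>>0. \<exists>\<delta>>0. \<forall>(Y::nat set) e.
            fin_metric_space Y e \<longrightarrow> has_magnitude Y e \<longrightarrow> gh_dist X d Y e < \<delta> \<longrightarrow>
            \<bar>magnitude Y e - magnitude X d\<bar> < \<epsilon>)"
proof
  assume "\<forall>\<epsilon>>0. \<exists>\<delta>>0. \<forall>(Y::nat set) e.
            fin_metric_space Y e \<longrightarrow> has_magnitude Y e \<longrightarrow> gh_dist X d Y e < \<delta> \<longrightarrow>
            \<bar>magnitude Y e - magnitude X d\<bar> < \<epsilon>"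
  from this[rule_format, of "1/5"] obtain \<delta> where "\<delta> > 0" and cont: "\<And>(Y::nat set) e.
      fin_metric_space Y e \<Longrightarrow> has_magnitude Y e \<Longrightarrow> gh_dist X d Y e < \<delta> \<Longrightarrow>
      \<bar>magnitude Y e - magnitude X d\<bar> < 1/5"
    by auto
  obtain Y :: "nat set" and e where
    "fin_metric_space Y e" "has_magnitude Y e" "gh_dist X d Y e \<le> \<delta> / 2"
    and jump: "magnitude Y e = magnitude X d + 6 / (1 + 4 * exp (- (\<delta> / 2))) - 1"
    using near_space_with_magnitude_jump[OF infinite_UNIV_nat assms half_gt_zero[OF \<open>\<delta> > 0\<close>]]
    by blast
  then have "\<bar>6 / (1 + 4 * exp (- (\<delta> / 2))) - 1\<bar> < 1/5"
    using cont[of Y e] \<open>\<delta> > 0\<close> by simp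
  moreover have "0 < exp (- (\<delta> / 2))" "exp (- (\<delta> / 2)) < 1" using \<open>\<delta> > 0\<close> by simp_all
  then have "6 / 5 < 6 / (1 + 4 * exp (- (\<delta> / 2)))"
    by (intro divide_strict_left_mono) (simp_all add: add_pos_pos)
  ultimately show False by simp
qed

end
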